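(* Let $H$ be a Hermitian operator on $n$ qubits, $\beta>0$, $\rho_\beta=e^{-\beta H}/\operatorname{tr}(e^{-\beta H})$, and let $O$ be a Hermitian observable with $[H,O]=0$. Then for any parameters $\kappa\ge\|O\|$ ($\kappa>0$), positive integer $m$ and $\gamma>0$, the GQPE measurement channel $\mathcal M$ and the associated map $\widehat{\mathcal M}$ both satisfy $s$-detailed balance with respect to $\rho_\beta$ for every $0\le s\le1$.
   Context: GQPE channel: given $O$, $\kappa$, $m$, $\gamma$, set $N=2^{2m}$, $h=2^{-m}$, $\omega_j=(j-N/2)h$ for $j=0,\dots,N-1$, $\xi_\ell=(\ell-N/2)h$, $\widehat g_\gamma(\xi)=(2\sqrt{2\pi}\gamma)^{1/2}e^{-4\pi^2\gamma^2\xi^2}$, $C=\big(h\sum_{\ell=1}^{N-1}\widehat g_\gamma(\xi_\ell)^2\big)^{1/2}$, $\tilde O=O/\kappa$, and Kraus operators $O_j=\frac{h^{3/2}}{C}\sum_{\ell=1}^{N-1}e^{2\pi i\xi_\ell(\omega_jI-\tilde O)}\widehat g_\gamma(\xi_\ell)$, $j=0,\dots,N-1$, so $\mathcal M(\rho)=\sum_jO_j\rho O_j^\dagger$ (a quantum channel). The outcome attached to index $j$ is $w_j=\kappa Z_j$, where $Z_j=\omega_j$ if $|\omega_j|\le2$ and $Z_j=0$ otherwise. With $\mathbb E_{\rho_\beta}(\mathcal M)=\sum_jw_j\operatorname{tr}(O_j\rho_\beta O_j^\dagger)$, define $\widehat{\mathcal M}(X)=\sum_j(w_j-\mathbb E_{\rho_\beta}(\mathcal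 M))O_jXO_j^\dagger$. For $s\in[0,1]$, $\langle A,B\rangle_s=\operatorname{tr}(A^\dagger\rho_\beta^{1-s}B\rho_\beta^s)$; a linear map $\mathcal T$ satisfies $s$-detailed balance w.r.t. $\rho_\beta$ if $\langle A,\mathcal T^\dagger(B)\rangle_s=\langle\mathcal T^\dagger(A),B\rangle_s$ for all $A,B$, where $\mathcal T^\dagger$ is the Hilbert–Schmidt adjoint. *)

theory Defs
  imports Complex_Main "Jordan_Normal_Form.Schur_Decomposition"
begin

definition mtrace :: "complex mat \<Rightarrow> complex" where
  "mtrace A = (\<Sum>i<dim_row A. A $$ (i, i))"

definition hermitian :: "complex mat \<Rightarrow> bool" where
  "hermitian A \<longleftrightarrow> A \<in> carrier_mat (dim_row A) (dim_row A) \<and> mat_adjoint A = A"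

definition unitary :: "complex mat \<Rightarrow> bool" where
  "unitary U \<longleftrightarrow> U \<in> carrier_mat (dim_row U) (dim_row U) \<and>
     U * mat_adjoint U = 1\<^sub>m (dim_row U) \<and> mat_adjoint U * U = 1\<^sub>m (dim_row U)"

definition dmat :: "complex list \<Rightarrow> complex mat" where
  "dmat xs = mat (length xs) (length xs) (\<lambda>(i, j). if i = j then xs ! i else 0)"

definition mexp :: "complex mat \<Rightarrow> complex mat" where
  "mexp A = mat (dim_row A) (dim_col A)
     (\<lambda>(i, j). \<Sum>k. (A ^\<^sub>m k) $$ (i, j) / of_nat (fact k))"

definition herm_fun :: "(real \<Rightarrow> complex) \<Rightarrow> complex mat \<Rightarrow> complex mat" where
  "herm_fun f A = (SOME B. \<exists>U lam. unitary U \<and> dim_row U = dim_row A \<and>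
       length lam = dim_row A \<and>
       A = U * dmat (map complex_of_real lam) * mat_adjoint U \<and>
       B = U * dmat (map f lam) * mat_adjoint U)"

definition mpow :: "complex mat \<Rightarrow> real \<Rightarrow> complex mat" where
  "mpow A s = herm_fun (\<lambda>x. complex_of_real (x powr s)) A"

definition vnorm :: "complex vec \<Rightarrow> real" where
  "vnorm v = sqrt (\<Sum>i<dim_vec v. (cmod (v $ i))\<^sup>2)"

definition opnorm :: "complex mat \<Rightarrow> real" where
  "opnorm A = Sup {vnorm (A *\<^sub>v v) | v. v \<in> carrier_vec (dim_col A) \<and> vnorm v = 1}"

definition msum :: "nat \<Rightarrow> ('i \<Rightarrow> complex mat) \<Rightarrow> 'i set \<Rightarrow> complex mat" where
  "msum d F S = mat d d (\<lambda>ij. \<Sum>x\<in>S. F x $$ ij)"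

definition gibbs :: "real \<Rightarrow> complex mat \<Rightarrow> complex mat" where
  "gibbs \<beta> H = (1 / mtrace (mexp (complex_of_real (- \<beta>) \<cdot>\<^sub>m H))) \<cdot>\<^sub>m
                  mexp (complex_of_real (- \<beta>) \<cdot>\<^sub>m H)"

definition inner_s :: "complex mat \<Rightarrow> real \<Rightarrow> complex mat \<Rightarrow> complex mat \<Rightarrow> complex" where
  "inner_s \<rho> s A B = mtrace (mat_adjoint A * mpow \<rho> (1 - s) * B * mpow \<rho> s)"

definition hs_adjoint :: "nat \<Rightarrow> (complex mat \<Rightarrow> complex mat) \<Rightarrow> complex mat \<Rightarrow> complex mat" where
  "hs_adjoint d T = (SOME S. (\<forall>X \<in> carrier_mat d d. S X \<in> carrier_mat d d) \<and>
      (\<forall>X \<in> carrier_mat d d. \<forall>Y \<in> carrier_mat d d.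
          mtrace (mat_adjoint X * T Y) = mtrace (mat_adjoint (S X) * Y)))"

definition s_detailed_balance ::
  "nat \<Rightarrow> (complex mat \<Rightarrow> complex mat) \<Rightarrow> complex mat \<Rightarrow> real \<Rightarrow> bool" where
  "s_detailed_balance d T \<rho> s \<longleftrightarrow>
     (\<forall>A \<in> carrier_mat d d. \<forall>B \<in> carrier_mat d d.
        inner_s \<rho> s A (hs_adjoint d T B) = inner_s \<rho> s (hs_adjoint d T A) B)"

definition gqpe_N :: "nat \<Rightarrow> nat" where "gqpe_N m = 2 ^ (2 * m)"
definition gqpe_h :: "nat \<Rightarrow> real" where "gqpe_h m = 2 powr (- real m)"
definition gqpe_grid :: "nat \<Rightarrow> nat \<Rightarrow> real" where
  "gqpe_grid m j = (real j - real (gqpe_N m) / 2) * gqpe_h m"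

definition ghat :: "real \<Rightarrow> real \<Rightarrow> real" where
  "ghat \<gamma> \<xi> = sqrt (2 * sqrt (2 * pi) * \<gamma>) * exp (- 4 * pi\<^sup>2 * \<gamma>\<^sup>2 * \<xi>\<^sup>2)"

definition gqpe_C :: "nat \<Rightarrow> real \<Rightarrow> real" where
  "gqpe_C m \<gamma> = sqrt (gqpe_h m * (\<Sum>l\<in>{1..<gqpe_N m}. (ghat \<gamma> (gqpe_grid m l))\<^sup>2))"

definition gqpe_kraus :: "complex mat \<Rightarrow> real \<Rightarrow> nat \<Rightarrow> real \<Rightarrow> nat \<Rightarrow> complex mat" where
  "gqpe_kraus Obs \<kappa> m \<gamma> j =
     (let d = dim_row Obs; Ot = complex_of_real (1 / \<kappa>) \<cdot>\<^sub>m Obs in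
      complex_of_real (gqpe_h m powr (3/2) / gqpe_C m \<gamma>) \<cdot>\<^sub>m
        msum d (\<lambda>l. complex_of_real (ghat \<gamma> (gqpe_grid m l)) \<cdot>\<^sub>m
           mexp ((2 * pi * \<i> * complex_of_real (gqpe_grid m l)) \<cdot>\<^sub>m
                 (complex_of_real (gqpe_grid m j) \<cdot>\<^sub>m 1\<^sub>m d - Ot))) {1..<gqpe_N m})"

definition gqpe_Z :: "nat \<Rightarrow> nat \<Rightarrow> real" where
  "gqpe_Z m j = (if \<bar>gqpe_grid m j\<bar> \<le> 2 then gqpe_grid m j else 0)"

definition gqpe_w :: "real \<Rightarrow> nat \<Rightarrow> nat \<Rightarrow> real" where
  "gqpe_w \<kappa> m j = \<kappa> * gqpe_Z m j"

definition gqpe_channel :: "complex mat \<Rightarrow> real \<Rightarrow> nat \<Rightarrow> real \<Rightarrow> complex mat \<Rightarrow> complex mat" where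
  "gqpe_channel Obs \<kappa> m \<gamma> X =
     msum (dim_row Obs) (\<lambda>j. gqpe_kraus Obs \<kappa> m \<gamma> j * X * mat_adjoint (gqpe_kraus Obs \<kappa> m \<gamma> j))
       {0..<gqpe_N m}"

definition gqpe_expect :: "complex mat \<Rightarrow> real \<Rightarrow> nat \<Rightarrow> real \<Rightarrow> complex mat \<Rightarrow> complex" where
  "gqpe_expect Obs \<kappa> m \<gamma> \<rho> =
     (\<Sum>j\<in>{0..<gqpe_N m}. complex_of_real (gqpe_w \<kappa> m j) *
        mtrace (gqpe_kraus Obs \<kappa> m \<gamma> j * \<rho> * mat_adjoint (gqpe_kraus Obs \<kappa> m \<gamma> j)))"

definition gqpe_hat :: "complex mat \<Rightarrow> real \<Rightarrow> nat \<Rightarrow> real \<Rightarrow> complex mat \<Rightarrow> complex mat \<Rightarrow> complex mat" where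
  "gqpe_hat Obs \<kappa> m \<gamma> \<rho> X =
     msum (dim_row Obs) (\<lambda>j. (complex_of_real (gqpe_w \<kappa> m j) - gqpe_expect Obs \<kappa> m \<gamma> \<rho>) \<cdot>\<^sub>m
        (gqpe_kraus Obs \<kappa> m \<gamma> j * X * mat_adjoint (gqpe_kraus Obs \<kappa> m \<gamma> j))) {0..<gqpe_N m}"

end

theory Submission
  imports Defs
begin

(* Every Kraus operator O_j is Hermitian: the grid is symmetric under l |-> N - l, the Gaussian
   weights are even and real, and the adjoint of exp(2 pi i xi Y) is exp(-2 pi i xi Y) for Hermitian Y.
   Being a function of O, each O_j also commutes with H, hence with rho_beta and, by the spectral
   theorem, with every power rho_beta^t. A map X |-> sum_j c_j O_j X O_j with real weights c_j is then
   self-adjoint for the Hilbert-Schmidt pairing (so it is its own Hilbert-Schmidt adjoint) and commutes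
   with X |-> rho^(1-s) X rho^s, which is exactly s-detailed balance. The channel has weights 1 and the
   centred map has weights w_j - E, which are real because E is a real combination of traces of
   Hermitian matrices. *)

lemma mat_adjoint_dim [simp]:
  "dim_row (mat_adjoint A) = dim_col A" "dim_col (mat_adjoint A) = dim_row A"
  by (auto simp: mat_adjoint_def)

lemma mat_adjoint_carrier [simp]: "A \<in> carrier_mat n m \<Longrightarrow> mat_adjoint A \<in> carrier_mat m n"
  unfolding carrier_mat_def by simp

lemma mat_adjoint_index [simp]:
  "i < dim_col A \<Longrightarrow> j < dim_row A \<Longrightarrow> mat_adjoint A $$ (i, j) = cnj (A $$ (j, i))"
  by (auto simp: mat_adjoint_def mat_of_rows_def)

lemma mat_adjoint_mat_adjoint [simp]: "mat_adjoint (mat_adjoint (A :: complex mat)) = A"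
  by (rule eq_matI) auto

lemma mat_adjoint_mult:
  fixes A B :: "complex mat"
  assumes "dim_col A = dim_row B"
  shows "mat_adjoint (A * B) = mat_adjoint B * mat_adjoint A"
  using assms by (intro eq_matI) (auto simp: scalar_prod_def cnj_sum mult.commute intro!: sum.cong)

lemma mat_adjoint_smult: "mat_adjoint (c \<cdot>\<^sub>m A) = cnj c \<cdot>\<^sub>m mat_adjoint A"
  by (rule eq_matI) auto

lemma mat_adjoint_minus:
  fixes A B :: "complex mat"
  assumes "dim_row A = dim_row B" "dim_col A = dim_col B"
  shows "mat_adjoint (A - B) = mat_adjoint A - mat_adjoint B"
  using assms by (intro eq_matI) auto

lemma mat_adjoint_one [simp]: "mat_adjoint (1\<^sub>m n :: complex mat) = 1\<^sub>m n"
  by (rule eq_matI) auto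

lemma mat_adjoint_zero [simp]: "mat_adjoint (0\<^sub>m n m :: complex mat) = 0\<^sub>m m n"
  by (rule eq_matI) auto

lemma mat_adjoint_four_block:
  fixes A :: "complex mat"
  assumes "A \<in> carrier_mat n1 m1" "B \<in> carrier_mat n1 m2" "C \<in> carrier_mat n2 m1" "D \<in> carrier_mat n2 m2"
  shows "mat_adjoint (four_block_mat A B C D) =
           four_block_mat (mat_adjoint A) (mat_adjoint C) (mat_adjoint B) (mat_adjoint D)"
  using assms by (intro eq_matI) auto

lemma mtrace_mult_comm:
  assumes "A \<in> carrier_mat n m" "B \<in> carrier_mat m n"
  shows "mtrace (A * B) = mtrace (B * A)"
proof -
  have "mtrace (A * B) = (\<Sum>i<n. \<Sum>k<m. A $$ (i, k) * B $$ (k, i))"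
    using assms by (auto simp: mtrace_def scalar_prod_def atLeast0LessThan intro!: sum.cong)
  also have "\<dots> = (\<Sum>k<m. \<Sum>i<n. B $$ (k, i) * A $$ (i, k))"
    by (subst sum.swap) (simp add: mult.commute)
  also have "\<dots> = mtrace (B * A)"
    using assms by (auto simp: mtrace_def scalar_prod_def atLeast0LessThan intro!: sum.cong)
  finally show ?thesis .
qed

lemma mtrace_adjoint: "A \<in> carrier_mat n n \<Longrightarrow> mtrace (mat_adjoint A) = cnj (mtrace A)"
  by (auto simp: mtrace_def cnj_sum)

lemma mtrace_selfadjoint_real:
  "A \<in> carrier_mat n n \<Longrightarrow> mat_adjoint A = A \<Longrightarrow> cnj (mtrace A) = mtrace A"
  by (metis mtrace_adjoint)

lemma mtrace_smult: "A \<in> carrier_mat n n \<Longrightarrow> mtrace (c \<cdot>\<^sub>m A) = c * mtrace A"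
  unfolding mtrace_def by (simp add: sum_distrib_left)

lemma msum_carrier [simp]: "msum d F S \<in> carrier_mat d d"
  by (simp add: msum_def)

lemma msum_dim [simp]: "dim_row (msum d F S) = d" "dim_col (msum d F S) = d"
  by (simp_all add: msum_def)

lemma msum_index [simp]: "i < d \<Longrightarrow> j < d \<Longrightarrow> msum d F S $$ (i, j) = (\<Sum>x\<in>S. F x $$ (i, j))"
  by (simp add: msum_def)

lemma msum_cong: "(\<And>x. x \<in> S \<Longrightarrow> F x = G x) \<Longrightarrow> msum d F S = msum d G S"
  by (auto simp: msum_def intro!: sum.cong)

lemma mult_msum:
  assumes M: "M \<in> carrier_mat d d" and F: "\<And>x. x \<in> S \<Longrightarrow> F x \<in> carrier_mat d d"
  shows "M * msum d F S = msum d (\<lambda>x. M * F x) S"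
proof (rule eq_matI)
  have Fd: "dim_row (F x) = d" "dim_col (F x) = d" if "x \<in> S" for x
    using F[OF that] by auto
  fix i j assume "i < dim_row (msum d (\<lambda>x. M * F x) S)" "j < dim_col (msum d (\<lambda>x. M * F x) S)"
  then have ij: "i < d" "j < d" by auto
  have "(M * msum d F S) $$ (i, j) = (\<Sum>k<d. M $$ (i, k) * (\<Sum>x\<in>S. F x $$ (k, j)))"
    using ij M by (auto simp: scalar_prod_def atLeast0LessThan intro!: sum.cong)
  also have "\<dots> = (\<Sum>x\<in>S. \<Sum>k<d. M $$ (i, k) * F x $$ (k, j))"
    by (simp add: sum_distrib_left sum.swap[of _ S])
  also have "\<dots> = msum d (\<lambda>x. M * F x) S $$ (i, j)"
    using ij M Fd by (auto simp: scalar_prod_def atLeast0LessThan intro!: sum.cong)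
  finally show "(M * msum d F S) $$ (i, j) = msum d (\<lambda>x. M * F x) S $$ (i, j)" .
qed (use M in auto)

lemma msum_mult:
  assumes M: "M \<in> carrier_mat d d" and F: "\<And>x. x \<in> S \<Longrightarrow> F x \<in> carrier_mat d d"
  shows "msum d F S * M = msum d (\<lambda>x. F x * M) S"
proof (rule eq_matI)
  have Fd: "dim_row (F x) = d" "dim_col (F x) = d" if "x \<in> S" for x
    using F[OF that] by auto
  fix i j assume "i < dim_row (msum d (\<lambda>x. F x * M) S)" "j < dim_col (msum d (\<lambda>x. F x * M) S)"
  then have ij: "i < d" "j < d" by auto
  have "(msum d F S * M) $$ (i, j) = (\<Sum>k<d. (\<Sum>x\<in>S. F x $$ (i, k)) * M $$ (k, j))"
    using ij M by (auto simp: scalar_prod_def atLeast0LessThan intro!: sum.cong)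
  also have "\<dots> = (\<Sum>x\<in>S. \<Sum>k<d. F x $$ (i, k) * M $$ (k, j))"
    by (simp add: sum_distrib_right sum.swap[of _ S])
  also have "\<dots> = msum d (\<lambda>x. F x * M) S $$ (i, j)"
    using ij M Fd by (auto simp: scalar_prod_def atLeast0LessThan intro!: sum.cong)
  finally show "(msum d F S * M) $$ (i, j) = msum d (\<lambda>x. F x * M) S $$ (i, j)" .
qed (use M in auto)

lemma mat_adjoint_msum:
  assumes "\<And>x. x \<in> S \<Longrightarrow> F x \<in> carrier_mat d d"
  shows "mat_adjoint (msum d F S) = msum d (\<lambda>x. mat_adjoint (F x)) S"
proof -
  have "dim_row (F x) = d" "dim_col (F x) = d" if "x \<in> S" for x
    using assms[OF that] by auto
  then show ?thesis by (intro eq_matI) (auto simp: cnj_sum intro!: sum.cong)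
qed

lemma mtrace_msum:
  assumes "\<And>x. x \<in> S \<Longrightarrow> F x \<in> carrier_mat d d"
  shows "mtrace (msum d F S) = (\<Sum>x\<in>S. mtrace (F x))"
  using assms by (auto simp: mtrace_def sum.swap[of _ S] intro!: sum.cong)

lemma msum_reflect: "msum d (\<lambda>l. F (N - l)) {1..<N} = msum d F {1..<(N :: nat)}"
proof -
  have "(\<Sum>l\<in>{1..<N}. F (N - l) $$ ij) = (\<Sum>l\<in>{1..<N}. F l $$ ij)" for ij
    by (rule sum.reindex_bij_witness[where i = "\<lambda>l. N - l" and j = "\<lambda>l. N - l"]) auto
  then show ?thesis unfolding msum_def by simp
qed

lemma commute_smult_left:
  fixes A B :: "complex mat"
  assumes A: "A \<in> carrier_mat d d" and B: "B \<in> carrier_mat d d" and AB: "A * B = B * A"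
  shows "(c \<cdot>\<^sub>m A) * B = B * (c \<cdot>\<^sub>m A)"
  using mult_smult_assoc_mat[OF A B, of c] mult_smult_distrib[OF B A, of c] AB by simp

lemma commute_smult_right:
  fixes A B :: "complex mat"
  assumes A: "A \<in> carrier_mat d d" and B: "B \<in> carrier_mat d d" and AB: "A * B = B * A"
  shows "A * (c \<cdot>\<^sub>m B) = (c \<cdot>\<^sub>m B) * A"
  using commute_smult_left[OF B A AB[symmetric], of c] by simp

lemma commute_minus:
  fixes A B C :: "complex mat"
  assumes A: "A \<in> carrier_mat d d" and B: "B \<in> carrier_mat d d" and C: "C \<in> carrier_mat d d"
    and AB: "A * B = B * A" and AC: "A * C = C * A"
  shows "A * (B - C) = (B - C) * A"
  using mult_minus_distrib_mat[OF A B C] minus_mult_distrib_mat[OF B C A] AB AC by simp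

lemma commute_msum:
  fixes A :: "complex mat"
  assumes A: "A \<in> carrier_mat d d" and F: "\<And>x. x \<in> S \<Longrightarrow> F x \<in> carrier_mat d d"
    and AF: "\<And>x. x \<in> S \<Longrightarrow> A * F x = F x * A"
  shows "A * msum d F S = msum d F S * A"
proof -
  have "A * msum d F S = msum d (\<lambda>x. A * F x) S" by (rule mult_msum[OF A F])
  also have "\<dots> = msum d (\<lambda>x. F x * A) S" using AF by (rule msum_cong)
  also have "\<dots> = msum d F S * A" by (rule msum_mult[OF A F, symmetric])
  finally show ?thesis .
qed

section \<open>The matrix exponential\<close>

lemma mexp_dim [simp]: "dim_row (mexp A) = dim_row A" "dim_col (mexp A) = dim_col A"
  by (simp_all add: mexp_def)

lemma mexp_carrier [simp]: "A \<in> carrier_mat d d \<Longrightarrow> mexp A \<in> carrier_mat d d"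
  unfolding carrier_mat_def by simp

lemma mexp_index:
  "i < dim_row A \<Longrightarrow> j < dim_col A \<Longrightarrow>
     mexp A $$ (i, j) = (\<Sum>k. (A ^\<^sub>m k) $$ (i, j) / of_nat (fact k))"
  by (simp add: mexp_def)

lemma mat_pow_entry_bound:
  assumes A: "A \<in> carrier_mat d d" and "i < d" "j < d"
  shows "cmod ((A ^\<^sub>m k) $$ (i, j)) \<le> (\<Sum>l<d. \<Sum>j<d. cmod (A $$ (l, j))) ^ k"
  using assms(2,3)
proof (induction k arbitrary: i j)
  case 0
  then show ?case using A by auto
next
  case (Suc k)
  define M where "M = (\<Sum>l<d. \<Sum>j<d. cmod (A $$ (l, j)))"
  have M0: "M \<ge> 0" unfolding M_def by (intro sum_nonneg) auto
  have "(A ^\<^sub>m Suc k) $$ (i, j) = (\<Sum>l<d. (A ^\<^sub>m k) $$ (i, l) * A $$ (l, j))"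
    using Suc.prems A by (auto simp: scalar_prod_def atLeast0LessThan intro!: sum.cong)
  then have "cmod ((A ^\<^sub>m Suc k) $$ (i, j)) \<le> (\<Sum>l<d. cmod ((A ^\<^sub>m k) $$ (i, l)) * cmod (A $$ (l, j)))"
    by (auto intro!: order.trans[OF norm_sum] simp: norm_mult)
  also have "\<dots> \<le> (\<Sum>l<d. M ^ k * cmod (A $$ (l, j)))"
    using Suc.IH Suc.prems by (intro sum_mono mult_right_mono) (auto simp: M_def)
  also have "\<dots> = M ^ k * (\<Sum>l<d. cmod (A $$ (l, j)))"
    by (simp add: sum_distrib_left)
  also have "\<dots> \<le> M ^ k * M"
    using Suc.prems M0 unfolding M_def
    by (intro mult_left_mono sum_mono) (auto intro: member_le_sum[where f = "\<lambda>j. cmod (A $$ (_, j))"])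
  finally show ?case by (simp add: M_def mult.commute)
qed

lemma summable_mexp_entry:
  fixes A :: "complex mat"
  assumes A: "A \<in> carrier_mat d d" and ij: "i < d" "j < d"
  shows "summable (\<lambda>k. (A ^\<^sub>m k) $$ (i, j) / of_nat (fact k))"
proof (rule summable_comparison_test')
  define M where "M = (\<Sum>l<d. \<Sum>j<d. cmod (A $$ (l, j)))"
  show "summable (\<lambda>k. M ^ k / fact k)"
    using summable_exp_generic[of M] by (simp add: divide_inverse_commute)
  fix k :: nat
  show "norm ((A ^\<^sub>m k) $$ (i, j) / of_nat (fact k)) \<le> M ^ k / fact k"
    using mat_pow_entry_bound[OF A ij, of k] by (simp add: norm_divide M_def divide_right_mono)
qed

lemma mat_pow_commute:
  assumes A: "A \<in> carrier_mat d d" and B: "B \<in> carrier_mat d d" and AB: "A * B = B * A"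
  shows "A ^\<^sub>m k * B = B * A ^\<^sub>m k"
proof (induction k)
  case 0
  then show ?case using A B by simp
next
  case (Suc k)
  have P: "A ^\<^sub>m k \<in> carrier_mat d d" using A by simp
  have "A ^\<^sub>m Suc k * B = A ^\<^sub>m k * (A * B)" using assoc_mult_mat[OF P A B] by simp
  also have "\<dots> = (A ^\<^sub>m k * B) * A" unfolding AB by (rule assoc_mult_mat[OF P B A, symmetric])
  also have "\<dots> = B * A ^\<^sub>m Suc k" unfolding Suc.IH using assoc_mult_mat[OF B P A] by simp
  finally show ?case .
qed

text \<open>Absolute convergence of the series in every entry lets it be interchanged with the finite
  sums of matrix multiplication.\<close>

lemma mexp_commute:
  assumes A: "A \<in> carrier_mat d d" and B: "B \<in> carrier_mat d d" and AB: "A * B = B * A"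
  shows "mexp A * B = B * mexp A"
proof (rule eq_matI)
  fix i j assume "i < dim_row (B * mexp A)" "j < dim_col (B * mexp A)"
  then have ij: "i < d" "j < d" using A B by auto
  note summable = summable_mexp_entry[OF A]
  have "(mexp A * B) $$ (i, j) = (\<Sum>l<d. (\<Sum>k. (A ^\<^sub>m k) $$ (i, l) / of_nat (fact k)) * B $$ (l, j))"
    using ij A B
    by (auto simp: scalar_prod_def atLeast0LessThan mexp_index intro!: sum.cong)
  also have "\<dots> = (\<Sum>l<d. \<Sum>k. (A ^\<^sub>m k) $$ (i, l) / of_nat (fact k) * B $$ (l, j))"
    using summable ij by (intro sum.cong refl suminf_mult2) auto
  also have "\<dots> = (\<Sum>k. \<Sum>l<d. (A ^\<^sub>m k) $$ (i, l) / of_nat (fact k) * B $$ (l, j))"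
    using summable ij by (intro suminf_sum[symmetric] summable_mult2) auto
  also have "\<dots> = (\<Sum>k. (A ^\<^sub>m k * B) $$ (i, j) / of_nat (fact k))"
    using ij A B
    by (intro suminf_cong) (auto simp: scalar_prod_def atLeast0LessThan sum_divide_distrib intro!: sum.cong)
  also have "\<dots> = (\<Sum>k. (B * A ^\<^sub>m k) $$ (i, j) / of_nat (fact k))"
    using mat_pow_commute[OF A B AB] by simp
  also have "\<dots> = (\<Sum>k. \<Sum>l<d. B $$ (i, l) * ((A ^\<^sub>m k) $$ (l, j) / of_nat (fact k)))"
    using ij A B
    by (intro suminf_cong) (auto simp: scalar_prod_def atLeast0LessThan sum_divide_distrib intro!: sum.cong)
  also have "\<dots> = (\<Sum>l<d. \<Sum>k. B $$ (i, l) * ((A ^\<^sub>m k) $$ (l, j) / of_nat (fact k)))"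
    using summable ij by (intro suminf_sum summable_mult) auto
  also have "\<dots> = (\<Sum>l<d. B $$ (i, l) * (\<Sum>k. (A ^\<^sub>m k) $$ (l, j) / of_nat (fact k)))"
    using summable ij by (intro sum.cong refl suminf_mult) auto
  also have "\<dots> = (B * mexp A) $$ (i, j)"
    using ij A B by (auto simp: scalar_prod_def atLeast0LessThan mexp_index intro!: sum.cong)
  finally show "(mexp A * B) $$ (i, j) = (B * mexp A) $$ (i, j)" .
qed (use A B in auto)

lemma mat_adjoint_pow:
  fixes A :: "complex mat"
  assumes A: "A \<in> carrier_mat d d"
  shows "mat_adjoint (A ^\<^sub>m k) = mat_adjoint A ^\<^sub>m k"
proof (induction k)
  case 0
  then show ?case using A by simp
next
  case (Suc k)
  have "mat_adjoint (A ^\<^sub>m Suc k) = mat_adjoint (A * A ^\<^sub>m k)"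
    using mat_pow_commute[OF A A refl, of k] by simp
  also have "\<dots> = mat_adjoint A ^\<^sub>m Suc k"
    using A Suc.IH by (simp add: mat_adjoint_mult)
  finally show ?case .
qed

lemma mexp_adjoint:
  fixes A :: "complex mat"
  assumes A: "A \<in> carrier_mat d d"
  shows "mexp (mat_adjoint A) = mat_adjoint (mexp A)"
proof (rule eq_matI)
  fix i j assume "i < dim_row (mat_adjoint (mexp A))" "j < dim_col (mat_adjoint (mexp A))"
  then have ij: "i < d" "j < d" using A by auto
  have "mat_adjoint (mexp A) $$ (i, j) = cnj (\<Sum>k. (A ^\<^sub>m k) $$ (j, i) / of_nat (fact k))"
    using A ij by (simp add: mexp_index)
  also have "\<dots> = (\<Sum>k. cnj ((A ^\<^sub>m k) $$ (j, i) / of_nat (fact k)))"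
    using summable_mexp_entry[OF A ij(2) ij(1)] by (intro sums_unique sums_cnj[THEN iffD2] summable_sums)
  also have "\<dots> = mexp (mat_adjoint A) $$ (i, j)"
    using A ij by (simp add: mexp_index mat_adjoint_pow[OF A, symmetric])
  finally show "mexp (mat_adjoint A) $$ (i, j) = mat_adjoint (mexp A) $$ (i, j)" ..
qed (use A in auto)

section \<open>Spectral theorem and functional calculus\<close>

lemma unitaryI:
  assumes U: "U \<in> carrier_mat n n" and UU: "mat_adjoint U * U = 1\<^sub>m n"
  shows "unitary U"
  using U UU mat_mult_left_right_inverse[OF mat_adjoint_carrier[OF U] U UU]
  unfolding unitary_def by auto

lemma unitaryD:
  assumes "unitary U" "dim_row U = n"
  shows "U \<in> carrier_mat n n" "U * mat_adjoint U = 1\<^sub>m n" "mat_adjoint U * U = 1\<^sub>m n"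
  using assms unfolding unitary_def by auto

lemma unitary_cancel:
  assumes U: "unitary U" "dim_row U = n" and X: "dim_row X = n"
  shows "mat_adjoint U * (U * X) = X" "U * (mat_adjoint U * X) = X"
proof -
  have Uc: "U \<in> carrier_mat n n" and X: "X \<in> carrier_mat n (dim_col X)"
    using unitaryD(1)[OF U] X by auto
  show "mat_adjoint U * (U * X) = X" "U * (mat_adjoint U * X) = X"
    using assoc_mult_mat[OF mat_adjoint_carrier[OF Uc] Uc X] assoc_mult_mat[OF Uc mat_adjoint_carrier[OF Uc] X]
      unitaryD(2,3)[OF U] X
    by simp_all
qed

lemma unitary_mult:
  assumes U: "unitary U" "dim_row U = n" and V: "unitary V" "dim_row V = n"
  shows "unitary (U * V)"
proof (rule unitaryI)
  note Uc = unitaryD(1)[OF U] and Vc = unitaryD(1)[OF V]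
  show "U * V \<in> carrier_mat n n" using Uc Vc by simp
  have "mat_adjoint (U * V) * (U * V) = mat_adjoint V * (mat_adjoint U * (U * V))"
    using Uc Vc by (simp add: mat_adjoint_mult assoc_mult_mat[of _ n n _ n _ n])
  then show "mat_adjoint (U * V) * (U * V) = 1\<^sub>m n"
    using unitary_cancel(1)[OF U] unitaryD(3)[OF V] V by simp
qed

lemma four_block_diag_mult:
  assumes "A1 \<in> carrier_mat n1 n1" "B1 \<in> carrier_mat n1 n1" "A2 \<in> carrier_mat n2 n2" "B2 \<in> carrier_mat n2 n2"
  shows "four_block_mat A1 (0\<^sub>m n1 n2) (0\<^sub>m n2 n1) A2 * four_block_mat B1 (0\<^sub>m n1 n2) (0\<^sub>m n2 n1) B2
       = four_block_mat (A1 * B1) (0\<^sub>m n1 n2) (0\<^sub>m n2 n1) (A2 * B2)"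
  using assms by (subst mult_four_block_mat[of _ n1 n1 _ n2 _ n2 _ _ n1 _ n2]) auto

lemma unitary_four_block_diag_one:
  assumes U: "unitary U" "dim_row U = k"
  shows "unitary (four_block_mat (1\<^sub>m 1) (0\<^sub>m 1 k) (0\<^sub>m k 1) U)"
proof (rule unitaryI)
  note Uc = unitaryD(1)[OF U]
  show "four_block_mat (1\<^sub>m 1) (0\<^sub>m 1 k) (0\<^sub>m k 1) U \<in> carrier_mat (1 + k) (1 + k)"
    using four_block_carrier_mat[OF one_carrier_mat Uc] .
  have "mat_adjoint (four_block_mat (1\<^sub>m 1) (0\<^sub>m 1 k) (0\<^sub>m k 1) U) =
          four_block_mat (1\<^sub>m 1) (0\<^sub>m 1 k) (0\<^sub>m k 1) (mat_adjoint U)"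
    using mat_adjoint_four_block[OF one_carrier_mat zero_carrier_mat zero_carrier_mat Uc] by simp
  then show "mat_adjoint (four_block_mat (1\<^sub>m 1) (0\<^sub>m 1 k) (0\<^sub>m k 1) U) *
          four_block_mat (1\<^sub>m 1) (0\<^sub>m 1 k) (0\<^sub>m k 1) U = 1\<^sub>m (1 + k)"
    using four_block_diag_mult[OF one_carrier_mat one_carrier_mat mat_adjoint_carrier[OF Uc] Uc]
      unitaryD(3)[OF U] by simp
qed

lemma unitary_normalize_corthogonal:
  fixes ws :: "complex vec list"
  assumes ws: "set ws \<subseteq> carrier_vec n" "corthogonal ws" "length ws = n"
  defines "nr \<equiv> \<lambda>j. complex_of_real (sqrt (\<Sum>l<n. (cmod (ws ! j $ l))\<^sup>2))"
  shows "unitary (mat n n (\<lambda>(i, j). ws ! j $ i / nr j))"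
proof (rule unitaryI)
  define W where "W = mat n n (\<lambda>(i, j). ws ! j $ i / nr j)"
  define sq where "sq j = (\<Sum>l<n. (cmod (ws ! j $ l))\<^sup>2)" for j
  have wsc: "ws ! j \<in> carrier_vec n" if "j < n" for j using ws that by auto
  have inner: "(\<Sum>l<n. cnj (ws ! i $ l) * ws ! j $ l) = ws ! j \<bullet>c ws ! i" if "i < n" "j < n" for i j
    using wsc[OF that(1)] wsc[OF that(2)] by (auto simp: scalar_prod_def atLeast0LessThan intro!: sum.cong)
  have self: "(\<Sum>l<n. cnj (ws ! i $ l) * ws ! i $ l) = complex_of_real (sq i)" for i
    unfolding sq_def of_real_sum by (intro sum.cong refl) (metis complex_norm_square mult.commute)
  have sq_pos: "sq j > 0" if "j < n" for j
  proof -
    have "ws ! j \<bullet>c ws ! j \<noteq> 0" using ws(2,3) that unfolding corthogonal_def by auto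
    then have "sq j \<noteq> 0" using self[of j] inner[OF that that] by auto
    moreover have "sq j \<ge> 0" unfolding sq_def by (intro sum_nonneg) auto
    ultimately show ?thesis by auto
  qed
  have nr_sq: "nr j * nr j = complex_of_real (sq j)" if "j < n" for j
    using sq_pos[OF that] by (simp add: nr_def sq_def flip: of_real_mult)
  show "mat n n (\<lambda>(i, j). ws ! j $ i / nr j) \<in> carrier_mat n n" by simp
  show "mat_adjoint (mat n n (\<lambda>(i, j). ws ! j $ i / nr j)) * mat n n (\<lambda>(i, j). ws ! j $ i / nr j) = 1\<^sub>m n"
    unfolding W_def[symmetric]
  proof (rule eq_matI)
    fix i j assume "i < dim_row (1\<^sub>m n)" "j < dim_col (1\<^sub>m n)"
    then have i: "i < n" and j: "j < n" by auto
    have "(mat_adjoint W * W) $$ (i, j) = (\<Sum>l<n. cnj (ws ! i $ l / nr i) * (ws ! j $ l / nr j))"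
      using i j by (auto simp: scalar_prod_def atLeast0LessThan W_def intro!: sum.cong)
    also have "\<dots> = (\<Sum>l<n. cnj (ws ! i $ l) * ws ! j $ l) / (nr i * nr j)"
      by (simp add: nr_def sum_divide_distrib)
    also have "\<dots> = 1\<^sub>m n $$ (i, j)"
    proof (cases "i = j")
      case True
      then show ?thesis using self[of i] nr_sq[OF i] i sq_pos[OF i] by simp
    next
      case False
      have "ws ! j \<bullet>c ws ! i = 0" using ws(2,3) i j False unfolding corthogonal_def by auto
      then show ?thesis using inner[OF i j] False i j by simp
    qed
    finally show "(mat_adjoint W * W) $$ (i, j) = 1\<^sub>m n $$ (i, j)" .
  qed (simp_all add: W_def)
qed

lemma unitary_completion:
  fixes v :: "complex vec"
  assumes v: "v \<in> carrier_vec n" and v0: "v \<noteq> 0\<^sub>v n"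
  shows "\<exists>W c. unitary W \<and> dim_row W = n \<and> col W 0 = c \<cdot>\<^sub>v v"
proof -
  interpret cof_vec_space n "TYPE(complex)" .
  have n: "n \<noteq> 0" using v v0 by auto
  define b where "b = basis_completion v"
  from basis_completion[OF v v0, folded b_def]
  have dist_b: "distinct b" and indep: "\<not> lin_dep (set b)" and b: "set b \<subseteq> carrier_vec n"
    and hdb: "hd b = v" and len_b: "length b = n" by auto
  from hdb len_b n obtain vs where bv: "b = v # vs" by (cases b) auto
  define ws where "ws = gram_schmidt n b"
  from gram_schmidt_result[OF b dist_b indep refl, folded ws_def]
  have ws: "set ws \<subseteq> carrier_vec n" "corthogonal ws" "length ws = n"
    by (auto simp: len_b)
  from gram_schmidt_hd[OF v, of vs, folded bv] have "hd ws = v" unfolding ws_def .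
  then have ws0: "ws ! 0 = v" using ws(3) n by (cases ws) auto
  define nr where "nr = (\<lambda>j. complex_of_real (sqrt (\<Sum>l<n. (cmod (ws ! j $ l))\<^sup>2)))"
  define W where "W = mat n n (\<lambda>(i, j). ws ! j $ i / nr j)"
  have "unitary W" unfolding W_def nr_def by (rule unitary_normalize_corthogonal[OF ws])
  moreover have "col W 0 = (1 / nr 0) \<cdot>\<^sub>v v"
    using n v ws0 by (intro eq_vecI) (auto simp: W_def)
  ultimately show ?thesis by (auto simp: W_def)
qed

lemma selfadjoint_first_column_block:
  fixes B :: "complex mat"
  assumes B: "B \<in> carrier_mat (Suc k) (Suc k)" and Bh: "mat_adjoint B = B"
    and col0: "col B 0 = e \<cdot>\<^sub>v unit_vec (Suc k) 0"
  defines "B' \<equiv> mat k k (\<lambda>(i, j). B $$ (Suc i, Suc j))"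
  shows "B = four_block_mat (mat 1 1 (\<lambda>_. complex_of_real (Re e))) (0\<^sub>m 1 k) (0\<^sub>m k 1) B'"
    and "mat_adjoint B' = B'"
proof -
  have sym: "B $$ (i, j) = cnj (B $$ (j, i))" if "i < Suc k" "j < Suc k" for i j
    using that B mat_adjoint_index[of i B j] by (simp add: Bh)
  have Bi0: "B $$ (i, 0) = (if i = 0 then e else 0)" if "i < Suc k" for i
    using arg_cong[OF col0, of "\<lambda>x. x $ i"] that B by auto
  have "cnj e = e" using sym[of 0 0] Bi0[of 0] by simp
  then have e: "complex_of_real (Re e) = e"
    using arg_cong[OF \<open>cnj e = e\<close>, of Im] by (simp add: complex_eq_iff)
  show "B = four_block_mat (mat 1 1 (\<lambda>_. complex_of_real (Re e))) (0\<^sub>m 1 k) (0\<^sub>m k 1) B'"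
  proof (rule eq_matI)
    fix i j assume "i < dim_row (four_block_mat (mat 1 1 (\<lambda>_. complex_of_real (Re e))) (0\<^sub>m 1 k) (0\<^sub>m k 1) B')"
      "j < dim_col (four_block_mat (mat 1 1 (\<lambda>_. complex_of_real (Re e))) (0\<^sub>m 1 k) (0\<^sub>m k 1) B')"
    then have ij: "i < Suc k" "j < Suc k" by (auto simp: B'_def)
    show "B $$ (i, j) = four_block_mat (mat 1 1 (\<lambda>_. complex_of_real (Re e))) (0\<^sub>m 1 k) (0\<^sub>m k 1) B' $$ (i, j)"
      using ij Bi0 sym[of 0 j] e by (cases i; cases j) (auto simp: B'_def)
  qed (use B in \<open>auto simp: B'_def\<close>)
  show "mat_adjoint B' = B'"
  proof (rule eq_matI)
    fix i j assume "i < dim_row B'" "j < dim_col B'"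
    then show "mat_adjoint B' $$ (i, j) = B' $$ (i, j)"
      using sym[of "Suc i" "Suc j"] by (simp add: B'_def)
  qed (simp_all add: B'_def)
qed

lemma selfadjoint_deflation:
  fixes A :: "complex mat"
  assumes A: "A \<in> carrier_mat (Suc k) (Suc k)" and Ah: "mat_adjoint A = A"
  obtains W r B' where "unitary W" "dim_row W = Suc k" "B' \<in> carrier_mat k k" "mat_adjoint B' = B'"
    "mat_adjoint W * A * W = four_block_mat (mat 1 1 (\<lambda>_. complex_of_real r)) (0\<^sub>m 1 k) (0\<^sub>m k 1) B'"
proof -
  note assoc = assoc_mult_mat[of _ "Suc k" "Suc k" _ "Suc k" _ "Suc k"]
    and mc = mult_carrier_mat[of _ "Suc k" "Suc k" _ "Suc k"]
  obtain e v where v: "v \<in> carrier_vec (Suc k)" "v \<noteq> 0\<^sub>v (Suc k)" "A *\<^sub>v v = e \<cdot>\<^sub>v v"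
  proof -
    have "degree (char_poly A) = Suc k" using degree_monic_char_poly[OF A] by simp
    then obtain e where "poly (char_poly A) e = 0"
      using fundamental_theorem_of_algebra constant_degree by (metis nat.distinct(1))
    then have "eigenvalue A e" using eigenvalue_root_char_poly[OF A] by simp
    then show ?thesis using that A by (auto simp: eigenvalue_def eigenvector_def)
  qed
  obtain W c where W: "unitary W" "dim_row W = Suc k" and Wc: "col W 0 = c \<cdot>\<^sub>v v"
    using unitary_completion[OF v(1,2)] by blast
  note Wc' = unitaryD(1)[OF W]
  define B where "B = mat_adjoint W * A * W"
  have B: "B \<in> carrier_mat (Suc k) (Suc k)" using Wc' A by (simp add: B_def mc)
  have Bh: "mat_adjoint B = B"
    using Wc' A Ah by (simp add: B_def mat_adjoint_mult assoc mc)
  have "B = mat_adjoint W * (A * W)"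
    unfolding B_def by (rule assoc_mult_mat[OF mat_adjoint_carrier[OF Wc'] A Wc'])
  then have "col B 0 = mat_adjoint W *\<^sub>v col (A * W) 0"
    using col_mult2[OF mat_adjoint_carrier[OF Wc'] mc[OF A Wc'], of 0] by simp
  also have "col (A * W) 0 = A *\<^sub>v col W 0"
    using col_mult2[OF A Wc', of 0] by simp
  also have "A *\<^sub>v col W 0 = e \<cdot>\<^sub>v col W 0"
    unfolding Wc using v A by (simp add: mult_mat_vec smult_smult_assoc mult.commute)
  also have "mat_adjoint W *\<^sub>v (e \<cdot>\<^sub>v col W 0) = e \<cdot>\<^sub>v col (mat_adjoint W * W) 0"
    using mult_mat_vec[OF mat_adjoint_carrier[OF Wc'] col_carrier_vec[OF zero_less_Suc Wc'], of e]
      col_mult2[OF mat_adjoint_carrier[OF Wc'] Wc', of 0] Wc' by simp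
  finally have "col B 0 = e \<cdot>\<^sub>v unit_vec (Suc k) 0"
    using unitaryD(3)[OF W] by simp
  define B' where "B' = mat k k (\<lambda>(i, j). B $$ (Suc i, Suc j))"
  have B': "B' \<in> carrier_mat k k" by (simp add: B'_def)
  from selfadjoint_first_column_block[OF B Bh \<open>col B 0 = e \<cdot>\<^sub>v unit_vec (Suc k) 0\<close>, folded B'_def]
  have "B = four_block_mat (mat 1 1 (\<lambda>_. complex_of_real (Re e))) (0\<^sub>m 1 k) (0\<^sub>m k 1) B'"
    and "mat_adjoint B' = B'" .
  then show ?thesis using that[OF W B'] unfolding B_def by blast
qed

lemma unitary_block_diag_conj:
  assumes U: "unitary U" "dim_row U = k" and lam: "length lam = k"
  defines "V \<equiv> four_block_mat (1\<^sub>m 1) (0\<^sub>m 1 k) (0\<^sub>m k 1) U"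
  shows "V * dmat (map complex_of_real (r # lam)) * mat_adjoint V =
    four_block_mat (mat 1 1 (\<lambda>_. complex_of_real r)) (0\<^sub>m 1 k) (0\<^sub>m k 1) (U * dmat (map complex_of_real lam) * mat_adjoint U)"
proof -
  define E where "E = mat 1 1 (\<lambda>_. complex_of_real r)"
  define D where "D = dmat (map complex_of_real lam)"
  note Uc = unitaryD(1)[OF U]
  have E: "E \<in> carrier_mat 1 1" and D: "D \<in> carrier_mat k k"
    using lam by (simp_all add: E_def D_def dmat_def)
  have D_block: "dmat (map complex_of_real (r # lam)) = four_block_mat E (0\<^sub>m 1 k) (0\<^sub>m k 1) D"
    by (rule eq_matI) (auto simp: lam E_def D_def dmat_def nth_Cons')
  have V_adj: "mat_adjoint V = four_block_mat (1\<^sub>m 1) (0\<^sub>m 1 k) (0\<^sub>m k 1) (mat_adjoint U)"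
    unfolding V_def using mat_adjoint_four_block[OF one_carrier_mat zero_carrier_mat zero_carrier_mat Uc]
    by simp
  show ?thesis
    unfolding V_adj unfolding V_def D_block E_def[symmetric] D_def[symmetric]
    using four_block_diag_mult[OF one_carrier_mat E Uc D]
      four_block_diag_mult[OF mult_carrier_mat[OF one_carrier_mat E] one_carrier_mat
        mult_carrier_mat[OF Uc D] mat_adjoint_carrier[OF Uc]] E
    by simp
qed

theorem selfadjoint_unitary_diagonalization:
  fixes A :: "complex mat"
  assumes "A \<in> carrier_mat n n" "mat_adjoint A = A"
  shows "\<exists>U lam. unitary U \<and> dim_row U = n \<and> length lam = n \<and>
           A = U * dmat (map complex_of_real lam) * mat_adjoint U"
  using assms
proof (induction n arbitrary: A)
  case 0
  then show ?case
    by (intro exI[of _ "1\<^sub>m 0"] exI[of _ "[]"]) (auto simp: unitary_def dmat_def)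
next
  case (Suc k)
  note assoc = assoc_mult_mat[of _ "Suc k" "Suc k" _ "Suc k" _ "Suc k"]
    and mc = mult_carrier_mat[of _ "Suc k" "Suc k" _ "Suc k"]
  obtain W r B' where W: "unitary W" "dim_row W = Suc k" and B': "B' \<in> carrier_mat k k" "mat_adjoint B' = B'"
    and WAW: "mat_adjoint W * A * W = four_block_mat (mat 1 1 (\<lambda>_. complex_of_real r)) (0\<^sub>m 1 k) (0\<^sub>m k 1) B'"
    using selfadjoint_deflation[OF Suc.prems] .
  obtain U' lam' where U': "unitary U'" "dim_row U' = k" and lam': "length lam' = k"
    and B'_eq: "B' = U' * dmat (map complex_of_real lam') * mat_adjoint U'"
    using Suc.IH[OF B'] by blast
  define V where "V = four_block_mat (1\<^sub>m 1) (0\<^sub>m 1 k) (0\<^sub>m k 1) U'"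
  have V: "unitary V" "dim_row V = Suc k"
    using unitary_four_block_diag_one[OF U'] unitaryD(1)[OF U'] by (auto simp: V_def)
  have "A = W * (mat_adjoint W * A * W) * mat_adjoint W"
    using unitaryD(1)[OF W] Suc.prems(1) by (simp add: assoc mc unitary_cancel(2)[OF W] unitaryD(2)[OF W])
  also have "\<dots> = W * (V * dmat (map complex_of_real (r # lam')) * mat_adjoint V) * mat_adjoint W"
    unfolding WAW B'_eq V_def using unitary_block_diag_conj[OF U' lam'] by simp
  also have "\<dots> = (W * V) * dmat (map complex_of_real (r # lam')) * mat_adjoint (W * V)"
    using unitaryD(1)[OF W] unitaryD(1)[OF V] lam' by (simp add: mat_adjoint_mult assoc mc dmat_def)
  finally show ?case
    using unitary_mult[OF W V] W lam' by (intro exI[of _ "W * V"] exI[of _ "r # lam'"]) simp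
qed

lemma mult_dmat_index:
  assumes "dim_col M = length xs" "i < dim_row M" "j < length xs"
  shows "(M * dmat xs) $$ (i, j) = M $$ (i, j) * xs ! j"
proof -
  have "(M * dmat xs) $$ (i, j) = (\<Sum>k\<in>{0..<length xs}. M $$ (i, k) * (if k = j then xs ! k else 0))"
    using assms by (auto simp: scalar_prod_def dmat_def)
  also have "\<dots> = (\<Sum>k\<in>{0..<length xs}. if k = j then M $$ (i, j) * xs ! j else 0)"
    by (intro sum.cong) auto
  finally show ?thesis using assms by simp
qed

lemma dmat_mult_index:
  assumes "dim_row M = length xs" "i < length xs" "j < dim_col M"
  shows "(dmat xs * M) $$ (i, j) = xs ! i * M $$ (i, j)"
proof -
  have "(dmat xs * M) $$ (i, j) = (\<Sum>k\<in>{0..<length xs}. (if i = k then xs ! i else 0) * M $$ (k, j))"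
    using assms by (auto simp: scalar_prod_def dmat_def)
  also have "\<dots> = (\<Sum>k\<in>{0..<length xs}. if i = k then xs ! i * M $$ (i, j) else 0)"
    by (intro sum.cong) auto
  finally show ?thesis using assms by simp
qed

text \<open>Whatever commutes with a real diagonal matrix only links equal eigenvalues,
  hence commutes with every function of it.\<close>

lemma dmat_commute_map:
  fixes C :: "complex mat" and lam :: "real list"
  assumes C: "C \<in> carrier_mat d d" and lam: "length lam = d"
    and comm: "dmat (map complex_of_real lam) * C = C * dmat (map complex_of_real lam)"
  shows "dmat (map f lam) * C = C * dmat (map f lam)"
proof (rule eq_matI)
  fix i j assume "i < dim_row (C * dmat (map f lam))" "j < dim_col (C * dmat (map f lam))"
  then have ij: "i < d" "j < d" using C lam by (auto simp: dmat_def)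
  have "complex_of_real (lam ! i) * C $$ (i, j) = C $$ (i, j) * complex_of_real (lam ! j)"
    using arg_cong[OF comm, of "\<lambda>M. M $$ (i, j)"] ij C lam
    by (simp add: mult_dmat_index dmat_mult_index)
  then have "C $$ (i, j) = 0 \<or> lam ! i = lam ! j"
    by (metis mult.commute mult_cancel_left of_real_eq_iff)
  then show "(dmat (map f lam) * C) $$ (i, j) = (C * dmat (map f lam)) $$ (i, j)"
    using ij C lam by (auto simp: mult_dmat_index dmat_mult_index)
qed (use C lam in \<open>auto simp: dmat_def\<close>)

lemma unitary_conj_commute_iff:
  fixes U B M :: "complex mat"
  assumes U: "unitary U" "dim_row U = d" and B: "B \<in> carrier_mat d d" and M: "M \<in> carrier_mat d d"
  shows "(U * M * mat_adjoint U) * B = B * (U * M * mat_adjoint U) \<longleftrightarrow>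
         M * (mat_adjoint U * B * U) = (mat_adjoint U * B * U) * M"
proof -
  note Uc = unitaryD(1)[OF U]
  note assoc = assoc_mult_mat[of _ d d _ d _ d] and mc = mult_carrier_mat[of _ d d _ d]
  note cancel = unitary_cancel[OF U] unitaryD(2,3)[OF U]
  have "mat_adjoint U * ((U * M * mat_adjoint U) * B) * U = M * (mat_adjoint U * B * U)"
    and "mat_adjoint U * (B * (U * M * mat_adjoint U)) * U = (mat_adjoint U * B * U) * M"
    using Uc B M by (simp_all add: assoc mc cancel)
  moreover have "U * (M * (mat_adjoint U * B * U)) * mat_adjoint U = (U * M * mat_adjoint U) * B"
    and "U * ((mat_adjoint U * B * U) * M) * mat_adjoint U = B * (U * M * mat_adjoint U)"
    using Uc B M by (simp_all add: assoc mc cancel)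
  ultimately show ?thesis by metis
qed

lemma herm_fun_spectral:
  fixes A :: "complex mat"
  assumes A: "A \<in> carrier_mat d d" and Ah: "mat_adjoint A = A"
  obtains U lam where "unitary U" "dim_row U = d" "length lam = d"
    "A = U * dmat (map complex_of_real lam) * mat_adjoint U"
    "herm_fun f A = U * dmat (map f lam) * mat_adjoint U"
proof -
  let ?P = "\<lambda>M. \<exists>U lam. unitary U \<and> dim_row U = d \<and> length lam = d \<and>
       A = U * dmat (map complex_of_real lam) * mat_adjoint U \<and> M = U * dmat (map f lam) * mat_adjoint U"
  have dA: "dim_row A = d" using A by simp
  obtain U lam where U: "unitary U" "dim_row U = d" "length lam = d"
    "A = U * dmat (map complex_of_real lam) * mat_adjoint U"
    using selfadjoint_unitary_diagonalization[OF A Ah] by blast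
  then have "?P (U * dmat (map f lam) * mat_adjoint U)"
    by (intro exI[of _ U] exI[of _ lam] conjI U refl)
  then have "?P (herm_fun f A)" unfolding herm_fun_def dA by (rule someI)
  then show ?thesis using that by metis
qed

lemma herm_fun_carrier:
  assumes "A \<in> carrier_mat d d" "mat_adjoint A = A"
  shows "herm_fun f A \<in> carrier_mat d d"
proof -
  obtain U lam where U: "unitary U" "dim_row U = d" and lam: "length lam = d"
    and "A = U * dmat (map complex_of_real lam) * mat_adjoint U"
    and F: "herm_fun f A = U * dmat (map f lam) * mat_adjoint U"
    by (rule herm_fun_spectral[OF assms])
  have "dmat (map f lam) \<in> carrier_mat d d" using lam by (simp add: dmat_def)
  then show ?thesis
    unfolding F using unitaryD(1)[OF U] by (meson mult_carrier_mat mat_adjoint_carrier)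
qed

lemma herm_fun_commute:
  fixes A B :: "complex mat"
  assumes A: "A \<in> carrier_mat d d" and Ah: "mat_adjoint A = A" and B: "B \<in> carrier_mat d d"
    and AB: "A * B = B * A"
  shows "herm_fun f A * B = B * herm_fun f A"
proof -
  obtain U lam where U: "unitary U" "dim_row U = d" and lam: "length lam = d"
    and A_eq: "A = U * dmat (map complex_of_real lam) * mat_adjoint U"
    and F_eq: "herm_fun f A = U * dmat (map f lam) * mat_adjoint U"
    by (rule herm_fun_spectral[OF A Ah])
  define C where "C = mat_adjoint U * B * U"
  have C: "C \<in> carrier_mat d d"
    unfolding C_def using unitaryD(1)[OF U] B by (meson mult_carrier_mat mat_adjoint_carrier)
  have D: "dmat (map complex_of_real lam) \<in> carrier_mat d d" and F: "dmat (map f lam) \<in> carrier_mat d d"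
    using lam by (simp_all add: dmat_def)
  have "dmat (map complex_of_real lam) * C = C * dmat (map complex_of_real lam)"
    using unitary_conj_commute_iff[OF U B D, THEN iffD1] AB unfolding A_eq C_def by blast
  then have "dmat (map f lam) * C = C * dmat (map f lam)"
    by (rule dmat_commute_map[OF C lam])
  then show ?thesis
    using unitary_conj_commute_iff[OF U B F, THEN iffD2] unfolding F_eq C_def by blast
qed

section \<open>Hilbert--Schmidt adjoint and weighted Kraus maps\<close>

definition elementary_mat :: "nat \<Rightarrow> nat \<Rightarrow> nat \<Rightarrow> complex mat" where
  "elementary_mat d a b = mat d d (\<lambda>(i, j). if i = a \<and> j = b then 1 else 0)"

lemma mtrace_mult_elementary_mat:
  assumes M: "M \<in> carrier_mat d d" and ab: "a < d" "b < d"
  shows "mtrace (M * elementary_mat d a b) = M $$ (b, a)"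
proof -
  have "(M * elementary_mat d a b) $$ (i, i) = (if i = b then M $$ (i, a) else 0)" if i: "i < d" for i
  proof -
    have "(M * elementary_mat d a b) $$ (i, i) = (\<Sum>k\<in>{0..<d}. if k = a \<and> i = b then M $$ (i, k) else 0)"
      using M i by (auto simp: scalar_prod_def elementary_mat_def intro!: sum.cong)
    then show ?thesis using ab by (simp add: sum.If_cases)
  qed
  then have "mtrace (M * elementary_mat d a b) = (\<Sum>i<d. if i = b then M $$ (i, a) else 0)"
    using M unfolding mtrace_def by (intro sum.cong) (auto simp: elementary_mat_def)
  also have "\<dots> = M $$ (b, a)" using ab by simp
  finally show ?thesis .
qed

lemma mtrace_pairing_inject:
  fixes X Z :: "complex mat"
  assumes X: "X \<in> carrier_mat d d" and Z: "Z \<in> carrier_mat d d"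
    and eq: "\<And>Y. Y \<in> carrier_mat d d \<Longrightarrow> mtrace (mat_adjoint X * Y) = mtrace (mat_adjoint Z * Y)"
  shows "X = Z"
proof -
  have "mat_adjoint X = mat_adjoint Z"
  proof (rule eq_matI)
    fix i j assume "i < dim_row (mat_adjoint Z)" "j < dim_col (mat_adjoint Z)"
    then have ij: "i < d" "j < d" using Z by auto
    have "elementary_mat d j i \<in> carrier_mat d d" by (simp add: elementary_mat_def)
    then show "mat_adjoint X $$ (i, j) = mat_adjoint Z $$ (i, j)"
      using eq mtrace_mult_elementary_mat[OF mat_adjoint_carrier[OF X] ij(2,1)]
        mtrace_mult_elementary_mat[OF mat_adjoint_carrier[OF Z] ij(2,1)]
      by metis
  qed (use X Z in auto)
  then show ?thesis by (metis mat_adjoint_mat_adjoint)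
qed

lemma hs_adjoint_selfadjoint:
  assumes closed: "\<And>X. X \<in> carrier_mat d d \<Longrightarrow> T X \<in> carrier_mat d d"
    and selfadjoint: "\<And>X Y. X \<in> carrier_mat d d \<Longrightarrow> Y \<in> carrier_mat d d \<Longrightarrow>
       mtrace (mat_adjoint X * T Y) = mtrace (mat_adjoint (T X) * Y)"
    and X: "X \<in> carrier_mat d d"
  shows "hs_adjoint d T X = T X"
proof -
  let ?Q = "\<lambda>S. (\<forall>X \<in> carrier_mat d d. S X \<in> carrier_mat d d) \<and>
      (\<forall>X \<in> carrier_mat d d. \<forall>Y \<in> carrier_mat d d.
          mtrace (mat_adjoint X * T Y) = mtrace (mat_adjoint (S X) * Y))"
  have "?Q T" using closed selfadjoint by blast
  then have Q: "?Q (hs_adjoint d T)" unfolding hs_adjoint_def by (rule someI[where P = ?Q])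
  show ?thesis
  proof (rule mtrace_pairing_inject)
    show "hs_adjoint d T X \<in> carrier_mat d d" using Q X by blast
    show "T X \<in> carrier_mat d d" using closed[OF X] .
    fix Y :: "complex mat" assume Y: "Y \<in> carrier_mat d d"
    then show "mtrace (mat_adjoint (hs_adjoint d T X) * Y) = mtrace (mat_adjoint (T X) * Y)"
      using Q X selfadjoint[OF X Y] by auto
  qed
qed

definition weighted_kraus_map ::
  "nat \<Rightarrow> ('i \<Rightarrow> complex) \<Rightarrow> ('i \<Rightarrow> complex mat) \<Rightarrow> 'i set \<Rightarrow> complex mat \<Rightarrow> complex mat" where
  "weighted_kraus_map d c K S X = msum d (\<lambda>j. c j \<cdot>\<^sub>m (K j * X * mat_adjoint (K j))) S"

lemma weighted_kraus_map_carrier [simp]: "weighted_kraus_map d c K S X \<in> carrier_mat d d"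
  by (simp add: weighted_kraus_map_def)

context
  fixes d :: nat and c :: "'i \<Rightarrow> complex" and K :: "'i \<Rightarrow> complex mat" and S :: "'i set"
  assumes K_carrier: "\<And>j. j \<in> S \<Longrightarrow> K j \<in> carrier_mat d d"
    and K_selfadjoint: "\<And>j. j \<in> S \<Longrightarrow> mat_adjoint (K j) = K j"
    and c_real: "\<And>j. j \<in> S \<Longrightarrow> cnj (c j) = c j"
begin

private lemma weighted_kraus_map_eq:
  "weighted_kraus_map d c K S X = msum d (\<lambda>j. c j \<cdot>\<^sub>m (K j * X * K j)) S"
  unfolding weighted_kraus_map_def by (rule msum_cong) (simp add: K_selfadjoint)

lemma weighted_kraus_map_hs_selfadjoint:
  assumes X: "X \<in> carrier_mat d d" and Y: "Y \<in> carrier_mat d d"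
  shows "mtrace (mat_adjoint X * weighted_kraus_map d c K S Y) =
         mtrace (mat_adjoint (weighted_kraus_map d c K S X) * Y)"
proof -
  note assoc = assoc_mult_mat[of _ d d _ d _ d] and mc = mult_carrier_mat[of _ d d _ d]
  have Xa: "mat_adjoint X \<in> carrier_mat d d" using X by simp
  have summand: "mtrace (mat_adjoint X * (c j \<cdot>\<^sub>m (K j * Y * K j))) =
      mtrace (mat_adjoint (c j \<cdot>\<^sub>m (K j * X * K j)) * Y)" if j: "j \<in> S" for j
  proof -
    note Kj = K_carrier[OF j]
    have "mat_adjoint (c j \<cdot>\<^sub>m (K j * X * K j)) = c j \<cdot>\<^sub>m (K j * mat_adjoint X * K j)"
      using Kj X c_real[OF j] K_selfadjoint[OF j] by (simp add: mat_adjoint_smult mat_adjoint_mult assoc mc)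
    moreover have "mtrace (mat_adjoint X * (K j * Y * K j)) = mtrace (K j * mat_adjoint X * K j * Y)"
    proof -
      have "mtrace (mat_adjoint X * (K j * Y * K j)) = mtrace ((mat_adjoint X * K j * Y) * K j)"
        using Kj Xa Y by (simp add: assoc mc)
      also have "\<dots> = mtrace (K j * (mat_adjoint X * K j * Y))"
        using Kj Xa Y by (intro mtrace_mult_comm[of _ d d]) (simp_all add: mc)
      also have "\<dots> = mtrace (K j * mat_adjoint X * K j * Y)"
        using Kj Xa Y by (simp add: assoc mc)
      finally show ?thesis .
    qed
    moreover have "K j * Y * K j \<in> carrier_mat d d" and "K j * mat_adjoint X * K j \<in> carrier_mat d d"
      using Kj Xa Y by (simp_all add: mc)
    ultimately show ?thesis
      using Xa Y by (simp add: mult_smult_distrib[of _ d d] mult_smult_assoc_mat[of _ d d] mtrace_smult[of _ d] mc)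
  qed
  have "mtrace (mat_adjoint X * weighted_kraus_map d c K S Y) =
      (\<Sum>j\<in>S. mtrace (mat_adjoint X * (c j \<cdot>\<^sub>m (K j * Y * K j))))"
    unfolding weighted_kraus_map_eq using Xa Y K_carrier
    by (simp add: mult_msum mtrace_msum mc)
  also have "\<dots> = (\<Sum>j\<in>S. mtrace (mat_adjoint (c j \<cdot>\<^sub>m (K j * X * K j)) * Y))"
    using summand by (rule sum.cong[OF refl])
  also have "\<dots> = mtrace (mat_adjoint (weighted_kraus_map d c K S X) * Y)"
    unfolding weighted_kraus_map_eq using X Y K_carrier
    by (simp add: mat_adjoint_msum msum_mult mtrace_msum mc)
  finally show ?thesis .
qed

lemma weighted_kraus_map_mult_commute:
  assumes P: "P \<in> carrier_mat d d" and Q: "Q \<in> carrier_mat d d" and X: "X \<in> carrier_mat d d"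
    and KP: "\<And>j. j \<in> S \<Longrightarrow> K j * P = P * K j" and KQ: "\<And>j. j \<in> S \<Longrightarrow> K j * Q = Q * K j"
  shows "P * weighted_kraus_map d c K S X * Q = weighted_kraus_map d c K S (P * X * Q)"
proof -
  note assoc = assoc_mult_mat[of _ d d _ d _ d] and mc = mult_carrier_mat[of _ d d _ d]
  have "P * (c j \<cdot>\<^sub>m (K j * X * K j)) * Q = c j \<cdot>\<^sub>m (K j * (P * X * Q) * K j)" if j: "j \<in> S" for j
  proof -
    note Kj = K_carrier[OF j]
    have "P * (K j * X * K j) * Q = P * K j * X * (K j * Q)"
      using Kj P Q X by (simp add: assoc mc)
    also have "\<dots> = K j * P * X * (Q * K j)"
      using KP[OF j] KQ[OF j] by simp
    also have "\<dots> = K j * (P * X * Q) * K j"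
      using Kj P Q X by (simp add: assoc mc)
    moreover have "K j * X * K j \<in> carrier_mat d d" using Kj X by (simp add: mc)
    ultimately show ?thesis
      using P Q by (simp add: mult_smult_distrib[of _ d d] mult_smult_assoc_mat[of _ d d] mc)
  qed
  then show ?thesis
    unfolding weighted_kraus_map_eq using P Q X K_carrier
    by (simp add: mult_msum msum_mult mc cong: msum_cong)
qed

text \<open>Commuting with the \<open>K\<^sub>j\<close>, the weights \<open>\<rho>\<^bsup>1-s\<^esup>\<close> and \<open>\<rho>\<^sup>s\<close> pass through the map,
  which Hilbert--Schmidt selfadjointness then moves to the other argument.\<close>

lemma weighted_kraus_map_s_detailed_balance:
  assumes mpow_carrier: "\<And>t. mpow \<rho> t \<in> carrier_mat d d"
    and K_mpow: "\<And>j t. j \<in> S \<Longrightarrow> K j * mpow \<rho> t = mpow \<rho> t * K j"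
  shows "s_detailed_balance d (weighted_kraus_map d c K S) \<rho> s"
  unfolding s_detailed_balance_def inner_s_def
proof (intro ballI)
  fix A B :: "complex mat" assume A: "A \<in> carrier_mat d d" and B: "B \<in> carrier_mat d d"
  note assoc = assoc_mult_mat[of _ d d _ d _ d] and mc = mult_carrier_mat[of _ d d _ d]
  let ?T = "weighted_kraus_map d c K S" and ?P = "mpow \<rho> (1 - s)" and ?Q = "mpow \<rho> s"
  have P: "?P \<in> carrier_mat d d" and Q: "?Q \<in> carrier_mat d d" by (rule mpow_carrier)+
  have hs: "hs_adjoint d ?T X = ?T X" if "X \<in> carrier_mat d d" for X
    using hs_adjoint_selfadjoint[of d ?T, OF _ weighted_kraus_map_hs_selfadjoint that] by simp
  have "mtrace (mat_adjoint A * ?P * ?T B * ?Q) = mtrace (mat_adjoint A * (?P * ?T B * ?Q))"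
    using A P Q by (simp add: assoc mc)
  also have "\<dots> = mtrace (mat_adjoint A * ?T (?P * B * ?Q))"
    using weighted_kraus_map_mult_commute[OF P Q B K_mpow K_mpow] by simp
  also have "\<dots> = mtrace (mat_adjoint (?T A) * (?P * B * ?Q))"
    using A B P Q by (intro weighted_kraus_map_hs_selfadjoint) (simp_all add: mc)
  also have "\<dots> = mtrace (mat_adjoint (?T A) * ?P * B * ?Q)"
    using B P Q by (simp add: assoc mc)
  finally show "mtrace (mat_adjoint A * ?P * hs_adjoint d ?T B * ?Q) =
      mtrace (mat_adjoint (hs_adjoint d ?T A) * ?P * B * ?Q)"
    using hs A B by simp
qed

end

section \<open>The GQPE channel\<close>

lemma gqpe_grid_reflect: "l \<le> gqpe_N m \<Longrightarrow> gqpe_grid m (gqpe_N m - l) = - gqpe_grid m l"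
  by (simp add: gqpe_grid_def of_nat_diff algebra_simps)

lemma ghat_uminus [simp]: "ghat \<gamma> (- \<xi>) = ghat \<gamma> \<xi>"
  by (simp add: ghat_def)

lemma mexp_imaginary_adjoint:
  fixes Y :: "complex mat"
  assumes Y: "Y \<in> carrier_mat d d" and Yh: "mat_adjoint Y = Y"
  shows "mat_adjoint (mexp ((2 * pi * \<i> * complex_of_real \<xi>) \<cdot>\<^sub>m Y)) =
         mexp ((2 * pi * \<i> * complex_of_real (- \<xi>)) \<cdot>\<^sub>m Y)"
proof -
  have "mat_adjoint ((2 * pi * \<i> * complex_of_real \<xi>) \<cdot>\<^sub>m Y) = (2 * pi * \<i> * complex_of_real (- \<xi>)) \<cdot>\<^sub>m Y"
    by (simp add: mat_adjoint_smult Yh)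
  then show ?thesis
    using mexp_adjoint[of "(2 * pi * \<i> * complex_of_real \<xi>) \<cdot>\<^sub>m Y" d] Y by simp
qed

lemma selfadjoint_exp_sum:
  fixes Y :: "complex mat" and g \<xi> :: "nat \<Rightarrow> real"
  assumes Y: "Y \<in> carrier_mat d d" and Yh: "mat_adjoint Y = Y"
    and reflect: "\<And>l. l \<in> {1..<N} \<Longrightarrow> \<xi> (N - l) = - \<xi> l \<and> g (N - l) = g l"
  defines "F \<equiv> \<lambda>l. complex_of_real (g l) \<cdot>\<^sub>m mexp ((2 * pi * \<i> * complex_of_real (\<xi> l)) \<cdot>\<^sub>m Y)"
  shows "mat_adjoint (msum d F {1..<N}) = msum d F {1..<N}"
proof -
  have "mat_adjoint (msum d F {1..<N}) = msum d (\<lambda>l. mat_adjoint (F l)) {1..<N}"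
    using Y by (intro mat_adjoint_msum) (simp add: F_def)
  also have "\<dots> = msum d (\<lambda>l. F (N - l)) {1..<N}"
  proof (rule msum_cong)
    fix l assume "l \<in> {1..<N}"
    then show "mat_adjoint (F l) = F (N - l)"
      using reflect mexp_imaginary_adjoint[OF Y Yh, of "\<xi> l"] by (simp add: F_def mat_adjoint_smult)
  qed
  also have "\<dots> = msum d F {1..<N}" by (rule msum_reflect)
  finally show ?thesis .
qed

lemma commute_exp_sum:
  fixes B Y :: "complex mat"
  assumes B: "B \<in> carrier_mat d d" and Y: "Y \<in> carrier_mat d d" and BY: "B * Y = Y * B"
  shows "B * msum d (\<lambda>l. c l \<cdot>\<^sub>m mexp (a l \<cdot>\<^sub>m Y)) S = msum d (\<lambda>l. c l \<cdot>\<^sub>m mexp (a l \<cdot>\<^sub>m Y)) S * B"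
proof (rule commute_msum[OF B])
  fix l
  have aY: "a l \<cdot>\<^sub>m Y \<in> carrier_mat d d" using Y by simp
  have "(a l \<cdot>\<^sub>m Y) * B = B * (a l \<cdot>\<^sub>m Y)" by (rule commute_smult_left[OF Y B BY[symmetric]])
  then have "mexp (a l \<cdot>\<^sub>m Y) * B = B * mexp (a l \<cdot>\<^sub>m Y)" by (rule mexp_commute[OF aY B])
  from commute_smult_right[OF B mexp_carrier[OF aY] this[symmetric]]
  show "B * (c l \<cdot>\<^sub>m mexp (a l \<cdot>\<^sub>m Y)) = (c l \<cdot>\<^sub>m mexp (a l \<cdot>\<^sub>m Y)) * B" .
qed (use Y in simp)

lemma gqpe_kraus_eq:
  assumes "dim_row Obs = d"
  shows "gqpe_kraus Obs \<kappa> m \<gamma> j = complex_of_real (gqpe_h m powr (3/2) / gqpe_C m \<gamma>) \<cdot>\<^sub>m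
    msum d (\<lambda>l. complex_of_real (ghat \<gamma> (gqpe_grid m l)) \<cdot>\<^sub>m
      mexp ((2 * pi * \<i> * complex_of_real (gqpe_grid m l)) \<cdot>\<^sub>m
        (complex_of_real (gqpe_grid m j) \<cdot>\<^sub>m 1\<^sub>m d - complex_of_real (1 / \<kappa>) \<cdot>\<^sub>m Obs))) {1..<gqpe_N m}"
  unfolding gqpe_kraus_def Let_def assms ..

lemma gqpe_kraus_carrier: "Obs \<in> carrier_mat d d \<Longrightarrow> gqpe_kraus Obs \<kappa> m \<gamma> j \<in> carrier_mat d d"
  by (simp add: gqpe_kraus_eq)

lemma gqpe_kraus_selfadjoint:
  assumes Obs: "Obs \<in> carrier_mat d d" and Obsh: "mat_adjoint Obs = Obs"
  shows "mat_adjoint (gqpe_kraus Obs \<kappa> m \<gamma> j) = gqpe_kraus Obs \<kappa> m \<gamma> j"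
proof -
  let ?Y = "complex_of_real (gqpe_grid m j) \<cdot>\<^sub>m 1\<^sub>m d - complex_of_real (1 / \<kappa>) \<cdot>\<^sub>m Obs"
  have Y: "?Y \<in> carrier_mat d d" using Obs by (intro minus_carrier_mat) simp
  have Yh: "mat_adjoint ?Y = ?Y" using Obs Obsh by (simp add: mat_adjoint_minus mat_adjoint_smult)
  have "mat_adjoint (msum d (\<lambda>l. complex_of_real (ghat \<gamma> (gqpe_grid m l)) \<cdot>\<^sub>m
      mexp ((2 * pi * \<i> * complex_of_real (gqpe_grid m l)) \<cdot>\<^sub>m ?Y)) {1..<gqpe_N m}) =
    msum d (\<lambda>l. complex_of_real (ghat \<gamma> (gqpe_grid m l)) \<cdot>\<^sub>m
      mexp ((2 * pi * \<i> * complex_of_real (gqpe_grid m l)) \<cdot>\<^sub>m ?Y)) {1..<gqpe_N m}"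
    by (rule selfadjoint_exp_sum[OF Y Yh]) (simp add: gqpe_grid_reflect)
  then show ?thesis using Obs by (simp add: gqpe_kraus_eq mat_adjoint_smult)
qed

lemma gqpe_kraus_commute:
  assumes Obs: "Obs \<in> carrier_mat d d" and B: "B \<in> carrier_mat d d" and BO: "B * Obs = Obs * B"
  shows "B * gqpe_kraus Obs \<kappa> m \<gamma> j = gqpe_kraus Obs \<kappa> m \<gamma> j * B"
proof -
  let ?Y = "complex_of_real (gqpe_grid m j) \<cdot>\<^sub>m 1\<^sub>m d - complex_of_real (1 / \<kappa>) \<cdot>\<^sub>m Obs"
  have Y: "?Y \<in> carrier_mat d d" using Obs by (intro minus_carrier_mat) simp
  have dO: "dim_row Obs = d" using Obs by simp
  have "B * ?Y = ?Y * B"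
    using B Obs by (intro commute_minus[of _ d] commute_smult_right[of _ d] BO) simp_all
  then have comm: "B * msum d (\<lambda>l. complex_of_real (ghat \<gamma> (gqpe_grid m l)) \<cdot>\<^sub>m
      mexp ((2 * pi * \<i> * complex_of_real (gqpe_grid m l)) \<cdot>\<^sub>m ?Y)) {1..<gqpe_N m} =
    msum d (\<lambda>l. complex_of_real (ghat \<gamma> (gqpe_grid m l)) \<cdot>\<^sub>m
      mexp ((2 * pi * \<i> * complex_of_real (gqpe_grid m l)) \<cdot>\<^sub>m ?Y)) {1..<gqpe_N m} * B"
    by (rule commute_exp_sum[OF B Y])
  show ?thesis
    unfolding gqpe_kraus_eq[OF dO] by (rule commute_smult_right[OF B msum_carrier comm])
qed

lemma gqpe_expect_real:
  assumes \<rho>: "\<rho> \<in> carrier_mat d d" and \<rho>h: "mat_adjoint \<rho> = \<rho>" and Obs: "Obs \<in> carrier_mat d d"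
  shows "cnj (gqpe_expect Obs \<kappa> m \<gamma> \<rho>) = gqpe_expect Obs \<kappa> m \<gamma> \<rho>"
proof -
  have "cnj (mtrace (K * \<rho> * mat_adjoint K)) = mtrace (K * \<rho> * mat_adjoint K)"
    if K: "K \<in> carrier_mat d d" for K
    using K \<rho> \<rho>h
    by (intro mtrace_selfadjoint_real[of _ d])
      (simp_all add: mat_adjoint_mult assoc_mult_mat[of _ d d _ d _ d] mult_carrier_mat[of _ d d _ d])
  then show ?thesis
    using gqpe_kraus_carrier[OF Obs] by (simp add: gqpe_expect_def cnj_sum)
qed

lemma gibbs_carrier: "H \<in> carrier_mat d d \<Longrightarrow> gibbs \<beta> H \<in> carrier_mat d d"
  by (simp add: gibbs_def)

lemma gibbs_selfadjoint:
  assumes H: "H \<in> carrier_mat d d" and Hh: "mat_adjoint H = H"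
  shows "mat_adjoint (gibbs \<beta> H) = gibbs \<beta> H"
proof -
  let ?E = "mexp (complex_of_real (- \<beta>) \<cdot>\<^sub>m H)"
  have E: "?E \<in> carrier_mat d d" using H by simp
  have Eh: "mat_adjoint ?E = ?E"
    using mexp_adjoint[of "complex_of_real (- \<beta>) \<cdot>\<^sub>m H" d] H Hh by (simp add: mat_adjoint_smult)
  then have "cnj (mtrace ?E) = mtrace ?E" by (rule mtrace_selfadjoint_real[OF E])
  then show ?thesis unfolding gibbs_def using Eh by (simp add: mat_adjoint_smult)
qed

lemma gibbs_commute:
  assumes H: "H \<in> carrier_mat d d" and B: "B \<in> carrier_mat d d" and HB: "H * B = B * H"
  shows "gibbs \<beta> H * B = B * gibbs \<beta> H"
proof -
  have bH: "complex_of_real (- \<beta>) \<cdot>\<^sub>m H \<in> carrier_mat d d" using H by simp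
  have "(complex_of_real (- \<beta>) \<cdot>\<^sub>m H) * B = B * (complex_of_real (- \<beta>) \<cdot>\<^sub>m H)"
    by (rule commute_smult_left[OF H B HB])
  then have "mexp (complex_of_real (- \<beta>) \<cdot>\<^sub>m H) * B = B * mexp (complex_of_real (- \<beta>) \<cdot>\<^sub>m H)"
    by (rule mexp_commute[OF bH B])
  then show ?thesis
    unfolding gibbs_def by (rule commute_smult_left[OF mexp_carrier[OF bH] B])
qed

lemma gqpe_kraus_mpow_gibbs_commute:
  assumes H: "H \<in> carrier_mat d d" "mat_adjoint H = H"
    and Obs: "Obs \<in> carrier_mat d d" and HO: "H * Obs = Obs * H"
  shows "gqpe_kraus Obs \<kappa> m \<gamma> j * mpow (gibbs \<beta> H) t = mpow (gibbs \<beta> H) t * gqpe_kraus Obs \<kappa> m \<gamma> j"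
proof -
  note K = gqpe_kraus_carrier[OF Obs]
  have "H * gqpe_kraus Obs \<kappa> m \<gamma> j = gqpe_kraus Obs \<kappa> m \<gamma> j * H"
    by (rule gqpe_kraus_commute[OF Obs H(1) HO])
  then have "gibbs \<beta> H * gqpe_kraus Obs \<kappa> m \<gamma> j = gqpe_kraus Obs \<kappa> m \<gamma> j * gibbs \<beta> H"
    by (rule gibbs_commute[OF H(1) K])
  then show ?thesis
    unfolding mpow_def
    by (rule herm_fun_commute[OF gibbs_carrier[OF H(1)] gibbs_selfadjoint[OF H] K, symmetric])
qed

lemma gqpe_channel_eq:
  "gqpe_channel Obs \<kappa> m \<gamma> = weighted_kraus_map (dim_row Obs) (\<lambda>_. 1) (gqpe_kraus Obs \<kappa> m \<gamma>) {0..<gqpe_N m}"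
proof -
  have "(1 :: complex) \<cdot>\<^sub>m X = X" for X by (rule eq_matI) auto
  then show ?thesis by (auto simp: gqpe_channel_def weighted_kraus_map_def)
qed

lemma gqpe_hat_eq:
  "gqpe_hat Obs \<kappa> m \<gamma> \<rho> = weighted_kraus_map (dim_row Obs)
     (\<lambda>j. complex_of_real (gqpe_w \<kappa> m j) - gqpe_expect Obs \<kappa> m \<gamma> \<rho>) (gqpe_kraus Obs \<kappa> m \<gamma>) {0..<gqpe_N m}"
  by (auto simp: gqpe_hat_def weighted_kraus_map_def)

theorem theorem6p2:
  fixes n :: nat and H Obs :: "complex mat" and \<beta> \<kappa> \<gamma> :: real and m :: nat
  assumes "H \<in> carrier_mat (2 ^ n) (2 ^ n)" and "hermitian H"
    and "\<beta> > 0"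
    and "Obs \<in> carrier_mat (2 ^ n) (2 ^ n)" and "hermitian Obs"
    and "H * Obs = Obs * H"
    and "\<kappa> > 0" and "\<kappa> \<ge> opnorm Obs"
    and "m > 0" and "\<gamma> > 0"
  shows "\<forall>s. 0 \<le> s \<and> s \<le> 1 \<longrightarrow>
           s_detailed_balance (2 ^ n) (gqpe_channel Obs \<kappa> m \<gamma>) (gibbs \<beta> H) s \<and>
           s_detailed_balance (2 ^ n) (gqpe_hat Obs \<kappa> m \<gamma> (gibbs \<beta> H)) (gibbs \<beta> H) s"
proof (intro allI impI)
  fix s :: real
  define d where "d = (2 :: nat) ^ n"
  define \<rho> where "\<rho> = gibbs \<beta> H"
  have H: "H \<in> carrier_mat d d" "mat_adjoint H = H" and Obs: "Obs \<in> carrier_mat d d" "mat_adjoint Obs = Obs"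
    using assms(1,2,4,5) by (auto simp: d_def hermitian_def)
  have \<rho>: "\<rho> \<in> carrier_mat d d" "mat_adjoint \<rho> = \<rho>"
    unfolding \<rho>_def using gibbs_carrier gibbs_selfadjoint H by auto
  have balance: "s_detailed_balance d (weighted_kraus_map d c (gqpe_kraus Obs \<kappa> m \<gamma>) {0..<gqpe_N m}) \<rho> s"
    if "\<And>j. cnj (c j) = c j" for c
    using that gqpe_kraus_carrier[OF Obs(1)] gqpe_kraus_selfadjoint[OF Obs] herm_fun_carrier[OF \<rho>]
      gqpe_kraus_mpow_gibbs_commute[OF H Obs(1) assms(6)]
    unfolding \<rho>_def by (intro weighted_kraus_map_s_detailed_balance) (auto simp: mpow_def)
  have "dim_row Obs = d" using Obs(1) by simp
  then show "s_detailed_balance (2 ^ n) (gqpe_channel Obs \<kappa> m \<gamma>) (gibbs \<beta> H) s \<and>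
      s_detailed_balance (2 ^ n) (gqpe_hat Obs \<kappa> m \<gamma> (gibbs \<beta> H)) (gibbs \<beta> H) s"
    using balance[of "\<lambda>_. 1"] balance gqpe_expect_real[OF \<rho> Obs(1)]
    unfolding gqpe_channel_eq gqpe_hat_eq d_def[symmetric] \<rho>_def[symmetric] by simp
qed

end
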